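(* For every $k\ge 3$ there exists a root $\lambda\in\mathbb{C}$ of the matching polynomial $\varphi(\mathrm{COMB}_k)$ such that $\lambda^k\notin\mathbb{R}$.
   Context: The $k$-comb $\mathrm{COMB}_k$ is the $k$-uniform hypergraph with vertex set $[k^2]$ and edge set consisting of the edge $[k]=\{1,\dots,k\}$ together with the $k$ edges $\{i+tk: 0\le t\le k-1\}$ for $i\in[k]$. A $t$-matching of a $k$-uniform hypergraph $H$ is a set of $t$ pairwise disjoint edges. The matching polynomial is $\varphi(H)=\sum_{i=0}^{m}(-1)^i|\mathcal{M}_i|\,x^{(m-i)k}$, where $\mathcal{M}_i$ is the set of $i$-matchings of $H$ and $m$ is the maximum size of a matching in $H$. (The paper phrases the conclusion as $\lambda\notin\mathbb{R}[\zeta_k]$, meaning $\lambda$ is not a $k$-th root of a real number.) *)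

theory Defs
  imports "HOL-Computational_Algebra.Polynomial" Complex_Main
begin

text \<open>A hypergraph is given by its edge set (a set of vertex sets).
  The k-comb: vertex set [k^2], edges [k] and the "teeth" {i + t k : 0 <= t <= k-1}, i in [k].\<close>

definition comb_vertices :: "nat \<Rightarrow> nat set" where
  "comb_vertices k = {1..k^2}"

definition comb_edges :: "nat \<Rightarrow> nat set set" where
  "comb_edges k = insert {1..k} ((\<lambda>i. {i + t * k | t. t \<le> k - 1}) ` {1..k})"

definition matchings :: "'a set set \<Rightarrow> nat \<Rightarrow> 'a set set set" where
  "matchings E i = {M. M \<subseteq> E \<and> pairwise disjnt M \<and> card M = i}"

definition matching_number :: "'a set set \<Rightarrow> nat" where
  "matching_number E = Max {card M | M. M \<subseteq> E \<and> pairwise disjnt M}"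

definition matching_poly :: "nat \<Rightarrow> 'a set set \<Rightarrow> complex poly" where
  "matching_poly k E = (let m = matching_number E in
     (\<Sum>i = 0..m. monom ((-1) ^ i * of_nat (card (matchings E i))) ((m - i) * k)))"

end

theory Submission
  imports Defs "HOL-Computational_Algebra.Fundamental_Theorem_Algebra"
begin

text \<open>The k teeth of the comb are pairwise disjoint and each meets the spine [k], so the
  i-matchings are the i-sets of teeth plus, for i = 1, the spine alone. Hence, with y = z^k,
  the matching polynomial evaluates to (y - 1)^k - y^(k-1). Substituting y = 1 + 1/v turns
  its zeros into the solutions of v (1 + v)^(k-1) = 1. This polynomial equation of degree k
  has k distinct solutions, but at most two real ones: on [-1, 0] the left side is
  nonpositive, and on each of x > 0 and x < -1 its absolute value is strictly monotone.
  So for k \<ge> 3 there is a nonreal solution v, and any k-th root z of 1 + 1/v is a zero of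
  the matching polynomial with z^k = 1 + 1/v nonreal.\<close>

lemma card_roots_rsquarefree:
  fixes p :: "complex poly"
  assumes "rsquarefree p"
  shows "card {z. poly p z = 0} = degree p"
proof -
  have "p \<noteq> 0"
    using assms by (simp add: rsquarefree_def)
  then have "degree p = degree (\<Prod>z | poly p z = 0. [:-z, 1:])"
    by (subst (1) complex_poly_decompose_rsquarefree[OF assms, symmetric]) simp
  also have "\<dots> = card {z. poly p z = 0}"
    by (subst degree_prod_sum_eq) simp_all
  finally show ?thesis ..
qed

lemma real_solution_cases:
  fixes x :: real
  assumes "x * (1 + x) ^ n = 1"
  shows "x < -1 \<or> 0 < x"
proof (rule ccontr)
  assume "\<not> (x < -1 \<or> 0 < x)"
  then have "x * (1 + x) ^ n \<le> 0"
    by (intro mult_nonpos_nonneg) auto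
  with assms show False by simp
qed

lemma real_solutions_sign_separated:
  fixes x y :: real
  assumes x: "x * (1 + x) ^ n = 1" and y: "y * (1 + y) ^ n = 1" and "x < y"
  shows "x < 0 \<and> 0 < y"
proof -
  have "\<not> (0 < x)"
  proof
    assume "0 < x"
    with \<open>x < y\<close> have "x * (1 + x) ^ n < y * (1 + y) ^ n"
      by (intro mult_less_le_imp_less power_mono) auto
    with x y show False by simp
  qed
  moreover have "\<not> (y < -1)"
  proof
    assume "y < -1"
    with \<open>x < y\<close> have "\<bar>y\<bar> * \<bar>1 + y\<bar> ^ n < \<bar>x\<bar> * \<bar>1 + x\<bar> ^ n"
      by (intro mult_less_le_imp_less power_mono) auto
    with x y show False
      by (simp flip: abs_mult power_abs)
  qed
  ultimately show ?thesis
    using real_solution_cases[OF x] real_solution_cases[OF y] by auto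
qed

lemma card_real_solutions_le_two:
  fixes A :: "real set"
  assumes "finite A" and sol: "\<And>x. x \<in> A \<Longrightarrow> x * (1 + x) ^ n = 1"
  shows "card A \<le> 2"
proof -
  have sep: "x < 0 \<and> 0 < y" if "x \<in> A" "y \<in> A" "x < y" for x y
    using real_solutions_sign_separated[OF sol sol] that by blast
  have at_most_one: "card {x \<in> A. P x} \<le> 1"
    if no_pair: "\<And>x y. x \<in> A \<Longrightarrow> y \<in> A \<Longrightarrow> x < y \<Longrightarrow> P x \<Longrightarrow> P y \<Longrightarrow> False" for P
  proof -
    have "x = y" if "x \<in> A" "y \<in> A" "P x" "P y" for x y
      by (rule linorder_cases[of x y]) (use that no_pair in blast)+
    then show ?thesis
      using \<open>finite A\<close> unfolding One_nat_def by (subst card_le_Suc0_iff_eq) auto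
  qed
  have neg: "card {x \<in> A. x < 0} \<le> 1" and pos: "card {x \<in> A. 0 < x} \<le> 1"
    by (rule at_most_one; use sep in fastforce)+
  have "0 \<notin> A"
    using sol by fastforce
  then have "A = {x \<in> A. x < 0} \<union> {x \<in> A. 0 < x}"
    by (auto simp: not_less less_le)
  then have "card A \<le> card {x \<in> A. x < 0} + card {x \<in> A. 0 < x}"
    by (metis card_Un_le)
  with neg pos show ?thesis
    by simp
qed

definition comb_reduced_poly :: "nat \<Rightarrow> complex poly" where
  "comb_reduced_poly n = [:0, 1:] * [:1, 1:] ^ n + [:-1:]"

lemma poly_comb_reduced_poly [simp]:
  "poly (comb_reduced_poly n) v = v * (1 + v) ^ n - 1"
  by (simp add: comb_reduced_poly_def algebra_simps)

lemma degree_comb_reduced_poly: "degree (comb_reduced_poly n) = Suc n"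
proof -
  have "degree ([:0, 1:] * [:1, 1:] ^ n :: complex poly) = Suc n"
    by (subst degree_mult_eq) (auto simp: degree_power_eq)
  then show ?thesis
    unfolding comb_reduced_poly_def by (subst degree_add_eq_left) auto
qed

text \<open>The factor 1 + a avoids the exponent n - 1, which would need a case split on n.\<close>

lemma pderiv_comb_reduced_poly:
  "(1 + a) * poly (pderiv (comb_reduced_poly n)) a = (1 + a) ^ n * (1 + of_nat (Suc n) * a)"
proof (cases n)
  case (Suc m)
  have "pderiv (comb_reduced_poly n) = [:1, 1:] ^ n + [:0, 1:] * smult (of_nat n) ([:1, 1:] ^ m)"
    unfolding comb_reduced_poly_def Suc
    by (simp add: pderiv_add pderiv_mult pderiv_power_Suc pderiv_pCons del: power_Suc)
  then show ?thesis
    using Suc by (simp add: algebra_simps)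
qed (simp add: comb_reduced_poly_def pderiv_add pderiv_pCons)

lemma rsquarefree_comb_reduced_poly: "rsquarefree (comb_reduced_poly n)"
  unfolding rsquarefree_roots
proof (intro allI notI, elim conjE)
  fix a
  assume root: "poly (comb_reduced_poly n) a = 0"
    and "poly (pderiv (comb_reduced_poly n)) a = 0"
  then have "(1 + a) ^ n * (1 + of_nat (Suc n) * a) = 0"
    by (metis pderiv_comb_reduced_poly mult_zero_right)
  moreover have "1 + a \<noteq> 0"
    using root by (cases n) (auto simp: add_eq_0_iff)
  ultimately have "1 + of_nat (Suc n) * a = 0"
    by simp
  define r where "r = -1 / real (Suc n)"
  have a: "a = of_real r"
    using \<open>1 + of_nat (Suc n) * a = 0\<close> unfolding r_def
    by (simp add: field_simps del: of_nat_Suc) (simp add: eq_neg_iff_add_eq_0 add.commute)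
  have "of_real (r * (1 + r) ^ n) = (1 :: complex)"
    using root unfolding a by simp
  then have "r * (1 + r) ^ n = 1"
    using of_real_eq_1_iff by blast
  then show False
    using real_solution_cases[of r n] by (simp add: r_def field_simps)
qed

lemma exists_nonreal_solution:
  assumes "n \<ge> 2"
  shows "\<exists>v::complex. v * (1 + v) ^ n = 1 \<and> v \<notin> \<real>"
proof (rule ccontr)
  define S where "S = {v. poly (comb_reduced_poly n) v = 0}"
  assume "\<not> ?thesis"
  then have real: "v \<in> \<real>" if "v \<in> S" for v
    using that by (auto simp: S_def)
  have "finite S"
    unfolding S_def by (rule poly_roots_finite) (metis degree_0 degree_comb_reduced_poly nat.distinct(1))
  have "Re v * (1 + Re v) ^ n = 1" if "v \<in> S" for v
  proof -
    obtain x where v: "v = of_real x"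
      using real[OF \<open>v \<in> S\<close>] by (rule Reals_cases)
    have "of_real (x * (1 + x) ^ n) = (1 :: complex)"
      using \<open>v \<in> S\<close> unfolding v S_def by simp
    then show ?thesis
      unfolding v Re_complex_of_real using of_real_eq_1_iff by blast
  qed
  then have "card (Re ` S) \<le> 2"
    using \<open>finite S\<close> by (intro card_real_solutions_le_two) auto
  moreover have "inj_on Re S"
    by (rule inj_onI) (metis complex_eq_iff complex_is_Real_iff real)
  then have "card (Re ` S) = Suc n"
    using card_roots_rsquarefree[OF rsquarefree_comb_reduced_poly]
    unfolding S_def degree_comb_reduced_poly by (simp add: card_image)
  ultimately show False
    using assms by simp
qed

definition comb_tooth :: "nat \<Rightarrow> nat \<Rightarrow> nat set" where
  "comb_tooth k i = {i + t * k | t. t \<le> k - 1}"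

lemma comb_edges_eq: "comb_edges k = insert {1..k} (comb_tooth k ` {1..k})"
  unfolding comb_edges_def comb_tooth_def by simp

lemma mem_comb_tooth_self: "i \<in> comb_tooth k i"
  unfolding comb_tooth_def by force

lemma comb_tooth_index_eq:
  fixes i j t s k :: nat
  assumes "i + t * k = j + s * k" "i \<in> {1..k}" "j \<in> {1..k}"
  shows "i = j"
proof -
  have "i = j" if "i + t * k = j + s * k" "i \<le> k" "1 \<le> j" "t \<le> s" for i j t s :: nat
  proof -
    obtain d where "s = t + d"
      using \<open>t \<le> s\<close> le_Suc_ex by blast
    with that have "i = j + d * k"
      by (simp add: algebra_simps)
    moreover from this that have "d = 0"
      by (cases d) auto
    ultimately show ?thesis
      by simp
  qed
  with assms show ?thesis
    by (metis atLeastAtMost_iff nat_le_linear)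
qed

lemma disjnt_comb_tooth:
  assumes "i \<in> {1..k}" "j \<in> {1..k}" "i \<noteq> j"
  shows "disjnt (comb_tooth k i) (comb_tooth k j)"
  using comb_tooth_index_eq[OF _ assms(1,2)] assms(3)
  unfolding disjnt_def comb_tooth_def by blast

lemma pairwise_disjnt_comb_teeth: "pairwise disjnt (comb_tooth k ` {1..k})"
  by (rule pairwise_imageI) (use disjnt_comb_tooth in blast)

lemma inj_on_comb_tooth: "inj_on (comb_tooth k) {1..k}"
  by (rule inj_onI) (metis disjnt_comb_tooth disjnt_iff mem_comb_tooth_self)

lemma card_comb_teeth: "card (comb_tooth k ` {1..k}) = k"
  using card_image[OF inj_on_comb_tooth] by simp

lemma spine_not_comb_tooth:
  assumes "k \<ge> 2"
  shows "{1..k} \<notin> comb_tooth k ` {1..k}"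
proof
  assume "{1..k} \<in> comb_tooth k ` {1..k}"
  then obtain i where "i \<in> {1..k}" "comb_tooth k i = {1..k}"
    by blast
  moreover have "i + 1 * k \<in> comb_tooth k i"
    unfolding comb_tooth_def using assms by fastforce
  ultimately show False
    by auto
qed

lemma comb_matching_with_spine:
  assumes "M \<subseteq> comb_edges k" "pairwise disjnt M" "{1..k} \<in> M"
  shows "M = {{1..k}}"
proof -
  have "X = {1..k}" if "X \<in> M" for X
  proof (rule ccontr)
    assume "X \<noteq> {1..k}"
    then obtain i where "i \<in> {1..k}" "X = comb_tooth k i"
      using assms(1) \<open>X \<in> M\<close> unfolding comb_edges_eq by blast
    moreover have "disjnt {1..k} X"
      using pairwiseD[OF assms(2,3) \<open>X \<in> M\<close>] \<open>X \<noteq> {1..k}\<close> by simp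
    ultimately show False
      using mem_comb_tooth_self[of i k] by (auto simp: disjnt_iff)
  qed
  with assms(3) show ?thesis
    by blast
qed

lemma matchings_comb_edges:
  "matchings (comb_edges k) n =
    {M. M \<subseteq> comb_tooth k ` {1..k} \<and> card M = n} \<union> (if n = 1 then {{{1..k}}} else {})"
proof (intro equalityI subsetI)
  fix M
  assume "M \<in> matchings (comb_edges k) n"
  then have M: "M \<subseteq> comb_edges k" "pairwise disjnt M" "card M = n"
    unfolding matchings_def by auto
  show "M \<in> {M. M \<subseteq> comb_tooth k ` {1..k} \<and> card M = n} \<union> (if n = 1 then {{{1..k}}} else {})"
  proof (cases "{1..k} \<in> M")
    case True
    with M have "M = {{1..k}}"
      using comb_matching_with_spine by blast
    with M show ?thesis
      by simp
  next
    case False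
    with M show ?thesis
      unfolding comb_edges_eq by auto
  qed
next
  fix M
  assume "M \<in> {M. M \<subseteq> comb_tooth k ` {1..k} \<and> card M = n} \<union> (if n = 1 then {{{1..k}}} else {})"
  then consider "M \<subseteq> comb_tooth k ` {1..k}" "card M = n" | "M = {{1..k}}" "n = 1"
    by (auto split: if_splits)
  then show "M \<in> matchings (comb_edges k) n"
  proof cases
    case 1
    then show ?thesis
      using pairwise_subset[OF pairwise_disjnt_comb_teeth]
      unfolding matchings_def comb_edges_eq by blast
  qed (simp add: matchings_def comb_edges_eq)
qed

lemma card_matchings_comb_edges:
  assumes "k \<ge> 2"
  shows "card (matchings (comb_edges k) n) = (k choose n) + (if n = 1 then 1 else 0)"
proof -
  define S where "S = {M. M \<subseteq> comb_tooth k ` {1..k} \<and> card M = n}"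
  have "card S = k choose n"
    unfolding S_def using n_subsets[of "comb_tooth k ` {1..k}" n] card_comb_teeth[of k] by simp
  moreover have "finite S"
    unfolding S_def by simp
  moreover have "{{1..k}} \<notin> S"
    unfolding S_def using spine_not_comb_tooth[OF assms] by auto
  ultimately show ?thesis
    unfolding matchings_comb_edges S_def[symmetric] by (simp add: card_insert_disjoint)
qed

lemma matching_number_comb_edges:
  assumes "k \<ge> 1"
  shows "matching_number (comb_edges k) = k"
  unfolding matching_number_def
proof (rule Max_eqI)
  have "card M \<le> k" if "M \<subseteq> comb_edges k" "pairwise disjnt M" for M
  proof (cases "{1..k} \<in> M")
    case True
    then show ?thesis
      using comb_matching_with_spine[OF that True] assms by simp
  next
    case False
    with that have "M \<subseteq> comb_tooth k ` {1..k}"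
      unfolding comb_edges_eq by auto
    then show ?thesis
      using card_mono[of "comb_tooth k ` {1..k}" M] card_comb_teeth[of k] by simp
  qed
  then show "finite {card M | M. M \<subseteq> comb_edges k \<and> pairwise disjnt M}"
    and "\<And>y. y \<in> {card M | M. M \<subseteq> comb_edges k \<and> pairwise disjnt M} \<Longrightarrow> y \<le> k"
    by (auto intro: finite_subset[of _ "{..k}"])
  have "comb_tooth k ` {1..k} \<subseteq> comb_edges k"
    unfolding comb_edges_eq by blast
  then show "k \<in> {card M | M. M \<subseteq> comb_edges k \<and> pairwise disjnt M}"
    using card_comb_teeth[of k] pairwise_disjnt_comb_teeth[of k]
    unfolding mem_Collect_eq by (intro exI[of _ "comb_tooth k ` {1..k}"]) simp
qed

lemma poly_matching_poly_comb_edges: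
  assumes "k \<ge> 2"
  shows "poly (matching_poly k (comb_edges k)) z = (z ^ k - 1) ^ k - (z ^ k) ^ (k - 1)"
proof -
  define y where "y = z ^ k"
  have m: "matching_number (comb_edges k) = k"
    using assms by (simp add: matching_number_comb_edges)
  have "poly (matching_poly k (comb_edges k)) z =
      (\<Sum>i = 0..k. (-1) ^ i * of_nat ((k choose i) + (if i = 1 then 1 else 0)) * y ^ (k - i))"
    unfolding matching_poly_def Let_def m
      poly_sum poly_monom card_matchings_comb_edges[OF assms] y_def
    by (simp add: power_mult mult.commute)
  also have "\<dots> = (\<Sum>i = 0..k. of_nat (k choose i) * (-1) ^ i * y ^ (k - i)) +
                   (\<Sum>i = 0..k. if i = 1 then (-1) ^ i * y ^ (k - i) else 0)"
    by (subst sum.distrib[symmetric]) (rule sum.cong, auto simp: algebra_simps)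
  also have "(\<Sum>i = 0..k. of_nat (k choose i) * (-1) ^ i * y ^ (k - i)) = (-1 + y) ^ k"
    by (subst binomial_ring) (simp add: atLeast0AtMost)
  also have "(\<Sum>i = 0..k. if i = 1 then (-1) ^ i * y ^ (k - i) else 0) = - (y ^ (k - 1))"
    using assms by (subst sum.delta) auto
  finally show ?thesis
    unfolding y_def by simp
qed

lemma solution_inverse_power_eq:
  fixes v :: "'a :: field"
  assumes "v * (1 + v) ^ n = 1"
  shows "(1 / v) ^ Suc n = (1 + 1 / v) ^ n"
proof -
  have "v \<noteq> 0"
    using assms by auto
  then have "(1 + 1 / v) ^ n = (1 + v) ^ n / v ^ n"
    by (simp add: field_simps power_divide)
  also have "\<dots> = (1 / v) ^ Suc n"
    using assms \<open>v \<noteq> 0\<close> by (simp add: field_simps)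
  finally show ?thesis ..
qed

lemma exists_complex_nth_root:
  assumes "n > 0"
  shows "\<exists>z::complex. z ^ n = c"
proof (cases "c = 0")
  case False
  with card_nth_roots[OF False assms] assms show ?thesis
    by (metis (mono_tags) card.empty empty_Collect_eq less_not_refl)
qed (use assms in auto)

theorem mainTheorem6:
  fixes k :: nat
  assumes "k \<ge> 3"
  shows "\<exists>z::complex. poly (matching_poly k (comb_edges k)) z = 0 \<and> z ^ k \<notin> \<real>"
proof -
  have "2 \<le> k - 1"
    using assms by simp
  then obtain v :: complex where v: "v * (1 + v) ^ (k - 1) = 1" "v \<notin> \<real>"
    using exists_nonreal_solution by blast
  define y where "y = 1 + 1 / v"
  have "y \<notin> \<real>"
  proof
    assume "y \<in> \<real>"
    then have "1 / (y - 1) \<in> \<real>"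
      by simp
    with v(2) show False
      by (simp add: y_def)
  qed
  obtain z where z: "z ^ k = y"
    using exists_complex_nth_root[of k y] assms by auto
  have "(y - 1) ^ k = y ^ (k - 1)"
    using solution_inverse_power_eq[OF v(1)] assms by (simp add: y_def Suc_diff_le)
  then have "poly (matching_poly k (comb_edges k)) z = 0"
    using poly_matching_poly_comb_edges[of k z] assms z by simp
  with z \<open>y \<notin> \<real>\<close> show ?thesis
    by blast
qed

end
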